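(* Let $K$ be a field, $A\subset K$ and $B\subset K$ finite sets with $|A|=m$, $|B|=n$. Let $0\le p\le m$, $0\le q\le n$, set $d:=p+q$ and assume $\max\{m,n\}\le d\le m+n-1$. Set $k:=m+n-d-1$, $c:=(d-m)(n-q)+d-n$ and $e:=(d-m)(q+1)$. Then $$\operatorname{Syl}_{p,q}(A,B)=(-1)^c\binom{k}{n-q}\operatorname{Syl}_{0,k}(A,B)+(-1)^e\binom{k+1}{m-p}\operatorname{Syl}_{m,d-m}(A,B).$$
   Context: For finite sets $Y,Z$, $\mathcal{R}(Y,Z):=\prod_{y\in Y,z\in Z}(y-z)$ (equal to $1$ if $Y$ or $Z$ is empty), and $\mathcal{R}(x,Z):=\mathcal{R}(\{x\},Z)$. For $0\le p\le m$, $0\le q\le n$, $$\operatorname{Syl}_{p,q}(A,B)(x):=\sum_{\substack{A'\subset A,\ B'\subset B\\ |A'|=p,\ |B'|=q}}\mathcal{R}(A',B')\,\mathcal{R}(A\setminus A',B\setminus B')\,\frac{\mathcal{R}(x,A')\,\mathcal{R}(x,B')}{\mathcal{R}(A',A\setminus A')\,\mathcal{R}(B',B\setminus B')}.$$ *)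

theory Defs
  imports "HOL-Computational_Algebra.Polynomial"
begin

definition Rprod :: "'a::field set \<Rightarrow> 'a set \<Rightarrow> 'a" where
  "Rprod Y Z = (\<Prod>y\<in>Y. \<Prod>z\<in>Z. (y - z))"

definition Rpoly :: "'a::field set \<Rightarrow> 'a poly" where
  "Rpoly Y = (\<Prod>y\<in>Y. [:- y, 1:])"

definition Syl :: "nat \<Rightarrow> nat \<Rightarrow> 'a::field set \<Rightarrow> 'a set \<Rightarrow> 'a poly" where
  "Syl p q A B =
     (\<Sum>A'\<in>{A'. A' \<subseteq> A \<and> card A' = p}. \<Sum>B'\<in>{B'. B' \<subseteq> B \<and> card B' = q}.
        smult (Rprod A' B' * Rprod (A - A') (B - B') /
               (Rprod A' (A - A') * Rprod B' (B - B')))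
              (Rpoly A' * Rpoly B'))"

end

theory Submission
  imports Defs "HOL-Computational_Algebra.Polynomial_Factorial"
begin

text \<open>
  For disjoint \<open>A\<close> and \<open>B\<close> both sides are polynomials of degree at most \<open>p + q < |A| + |B|\<close>,
  so it suffices to compare them at the points of \<open>A \<union> B\<close>. At \<open>a \<in> A\<close> every term of
  \<open>Syl_{p,q}(A, B)\<close> with \<open>a \<in> A'\<close> vanishes, and what remains is \<open>R(a, B)\<close> times the top
  coefficient of \<open>Syl_{p,q}(A - {a}, B)\<close>; likewise at \<open>b \<in> B\<close>. These top coefficients are
  related to each other by comparing the coefficients of \<open>x^{p+q}\<close> in the identity for smaller
  sets and by the symmetry \<open>(A', B') \<mapsto> (A - A', B - B')\<close> of the weights, so the identity
  follows by induction on \<open>|A| + |B|\<close>.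

  For arbitrary \<open>A\<close> and \<open>B\<close>, replace \<open>B\<close> by \<open>B + T\<close> in the field \<open>K(T)\<close>, where it is
  disjoint from \<open>A\<close>. All coefficients of \<open>Syl_{p,q}(A, B + T)\<close> lie in \<open>K[T]\<close>, and setting
  \<open>T = 0\<close> gives back \<open>Syl_{p,q}(A, B)\<close>.
\<close>

abbreviation ksubsets :: "nat \<Rightarrow> 'b set \<Rightarrow> 'b set set" where
  "ksubsets k X \<equiv> {Y. Y \<subseteq> X \<and> card Y = k}"

definition syl_weight :: "'a::field set \<Rightarrow> 'a set \<Rightarrow> 'a set \<Rightarrow> 'a set \<Rightarrow> 'a" where
  "syl_weight A B A' B' =
     Rprod A' B' * Rprod (A - A') (B - B') / (Rprod A' (A - A') * Rprod B' (B - B'))"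

definition syl_lc :: "nat \<Rightarrow> nat \<Rightarrow> 'a::field set \<Rightarrow> 'a set \<Rightarrow> 'a" where
  "syl_lc p q A B = (\<Sum>A'\<in>ksubsets p A. \<Sum>B'\<in>ksubsets q B. syl_weight A B A' B')"

lemma Syl_eq_sum_syl_weight:
  "Syl p q A B = (\<Sum>A'\<in>ksubsets p A. \<Sum>B'\<in>ksubsets q B.
     smult (syl_weight A B A' B') (Rpoly A' * Rpoly B'))"
  unfolding Syl_def syl_weight_def ..

lemma finite_ksubsets [simp]: "finite X \<Longrightarrow> finite (ksubsets k X)"
  by (rule finite_subset[of _ "Pow X"]) auto

lemma ksubsets_empty: "finite X \<Longrightarrow> card X < k \<Longrightarrow> ksubsets k X = {}"
  by (auto dest: card_mono)

lemma Rprod_Un_left: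
  "finite X \<Longrightarrow> finite Y \<Longrightarrow> X \<inter> Y = {} \<Longrightarrow> Rprod (X \<union> Y) Z = Rprod X Z * Rprod Y Z"
  unfolding Rprod_def by (rule prod.union_disjoint)

lemma Rprod_Un_right:
  "finite Y \<Longrightarrow> finite Z \<Longrightarrow> Y \<inter> Z = {} \<Longrightarrow> Rprod X (Y \<union> Z) = Rprod X Y * Rprod X Z"
  unfolding Rprod_def by (simp add: prod.union_disjoint prod.distrib)

lemma Rprod_commute:
  assumes "finite X" "finite Y"
  shows "Rprod Y X = (-1) ^ (card X * card Y) * Rprod X Y"
proof -
  have "Rprod Y X = (\<Prod>y\<in>Y. (-1) ^ card X * (\<Prod>x\<in>X. x - y))"
    unfolding Rprod_def by (simp flip: prod_constant prod.distrib)
  also have "\<dots> = (-1) ^ (card X * card Y) * (\<Prod>y\<in>Y. \<Prod>x\<in>X. x - y)"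
    by (simp add: prod.distrib power_mult)
  also have "(\<Prod>y\<in>Y. \<Prod>x\<in>X. x - y) = Rprod X Y"
    unfolding Rprod_def by (rule prod.swap)
  finally show ?thesis .
qed

lemma Rprod_nonzero: "X \<inter> Y = {} \<Longrightarrow> Rprod X Y \<noteq> 0"
  unfolding Rprod_def
  by (cases "finite X"; cases "finite Y") (auto simp: prod_zero_iff)

lemma Rprod_singleton_mem: "finite X \<Longrightarrow> a \<in> X \<Longrightarrow> Rprod {a} X = 0"
  unfolding Rprod_def by (auto simp: prod_zero_iff)

lemma poly_Rpoly: "poly (Rpoly S) x = Rprod {x} S"
  unfolding Rpoly_def Rprod_def by (simp add: poly_prod)

lemma degree_Rpoly: "finite S \<Longrightarrow> degree (Rpoly S) = card S"
  unfolding Rpoly_def by (simp add: degree_prod_sum_eq)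

lemma lead_coeff_Rpoly: "lead_coeff (Rpoly S) = 1"
  unfolding Rpoly_def by (simp add: lead_coeff_prod)

lemma Rpoly_mult_top:
  assumes "finite X" "finite Y"
  shows "degree (Rpoly X * Rpoly Y) = card X + card Y"
    and "coeff (Rpoly X * Rpoly Y) (card X + card Y) = 1"
proof -
  have "Rpoly X \<noteq> 0" "Rpoly Y \<noteq> 0"
    using lead_coeff_Rpoly by (metis leading_coeff_0_iff zero_neq_one)+
  then show deg: "degree (Rpoly X * Rpoly Y) = card X + card Y"
    by (simp add: degree_mult_eq degree_Rpoly assms)
  show "coeff (Rpoly X * Rpoly Y) (card X + card Y) = 1"
    using lead_coeff_mult[of "Rpoly X" "Rpoly Y"] by (simp add: deg lead_coeff_Rpoly)
qed

section \<open>Values and top coefficient of Sylvester sums\<close>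

lemma degree_Syl_le: "finite A \<Longrightarrow> finite B \<Longrightarrow> degree (Syl p q A B) \<le> p + q"
  unfolding Syl_eq_sum_syl_weight
  by (intro degree_sum_le order_trans[OF degree_smult_le])
     (auto simp: Rpoly_mult_top(1) rev_finite_subset)

lemma coeff_Syl_top: "finite A \<Longrightarrow> finite B \<Longrightarrow> coeff (Syl p q A B) (p + q) = syl_lc p q A B"
  unfolding Syl_eq_sum_syl_weight syl_lc_def coeff_sum coeff_smult
  by (intro sum.cong refl) (metis (mono_tags) Rpoly_mult_top(2) finite_subset mem_Collect_eq mult_1_right)

lemma poly_Syl:
  "poly (Syl p q A B) x = (\<Sum>A'\<in>ksubsets p A. \<Sum>B'\<in>ksubsets q B.
     syl_weight A B A' B' * (Rprod {x} A' * Rprod {x} B'))"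
  unfolding Syl_eq_sum_syl_weight by (simp add: poly_sum poly_Rpoly)

lemma syl_weight_remove_from_A:
  assumes "finite A" "finite B" "a \<in> A" "A' \<subseteq> A - {a}" "B' \<subseteq> B"
  shows "syl_weight A B A' B' * (Rprod {a} A' * Rprod {a} B')
       = (-1) ^ card A' * Rprod {a} B * syl_weight (A - {a}) B A' B'"
proof -
  define U where "U = A - {a} - A'"
  define V where "V = B - B'"
  have fin: "finite A'" "finite B'" "finite U" "finite V"
    using assms unfolding U_def V_def by (auto intro: finite_subset)
  have A: "A - A' = {a} \<union> U" and B: "B = B' \<union> V"
    using assms unfolding U_def V_def by auto
  have "Rprod (A - A') V = Rprod {a} V * Rprod U V"
    unfolding A by (rule Rprod_Un_left) (use fin assms in \<open>auto simp: U_def\<close>)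
  moreover have "Rprod A' (A - A') = Rprod A' {a} * Rprod A' U"
    unfolding A by (rule Rprod_Un_right) (use fin assms in \<open>auto simp: U_def\<close>)
  moreover have "Rprod {a} A' = (-1) ^ card A' * Rprod A' {a}"
    using Rprod_commute[of A' "{a}"] fin by simp
  moreover have "Rprod {a} B = Rprod {a} B' * Rprod {a} V"
    unfolding B by (rule Rprod_Un_right) (use fin in \<open>auto simp: V_def\<close>)
  moreover have "Rprod A' {a} \<noteq> 0" "Rprod A' U \<noteq> 0" "Rprod B' V \<noteq> 0"
    using assms by (auto intro!: Rprod_nonzero simp: U_def V_def)
  moreover have "A - {a} - A' = U" "B - B' = V"
    unfolding U_def V_def by auto
  ultimately show ?thesis
    unfolding syl_weight_def by (simp add: field_simps)
qed

lemma syl_weight_remove_from_B: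
  assumes "finite A" "finite B" "b \<in> B" "A' \<subseteq> A" "B' \<subseteq> B - {b}"
  shows "syl_weight A B A' B' * (Rprod {b} A' * Rprod {b} B')
       = (-1) ^ (card A' + card B') * Rprod A {b} * syl_weight A (B - {b}) A' B'"
proof -
  define U where "U = A - A'"
  define V where "V = B - {b} - B'"
  have fin: "finite A'" "finite B'" "finite U" "finite V"
    using assms unfolding U_def V_def by (auto intro: finite_subset)
  have A: "A = A' \<union> U" and B: "B - B' = {b} \<union> V"
    using assms unfolding U_def V_def by auto
  have "Rprod U (B - B') = Rprod U {b} * Rprod U V"
    unfolding B by (rule Rprod_Un_right) (use fin assms in \<open>auto simp: V_def\<close>)
  moreover have "Rprod B' (B - B') = Rprod B' {b} * Rprod B' V"
    unfolding B by (rule Rprod_Un_right) (use fin assms in \<open>auto simp: V_def\<close>)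
  moreover have "Rprod {b} A' = (-1) ^ card A' * Rprod A' {b}"
    using Rprod_commute[of A' "{b}"] fin by simp
  moreover have "Rprod {b} B' = (-1) ^ card B' * Rprod B' {b}"
    using Rprod_commute[of B' "{b}"] fin by simp
  moreover have "Rprod A {b} = Rprod A' {b} * Rprod U {b}"
    by (subst A, rule Rprod_Un_left) (use fin in \<open>auto simp: U_def\<close>)
  moreover have "Rprod B' {b} \<noteq> 0" "Rprod A' U \<noteq> 0" "Rprod B' V \<noteq> 0"
    using assms by (auto intro!: Rprod_nonzero simp: U_def V_def)
  moreover have "A - A' = U" "B - {b} - B' = V"
    unfolding U_def V_def by auto
  ultimately show ?thesis
    unfolding syl_weight_def by (simp add: field_simps power_add)
qed

lemma poly_Syl_at_A:
  assumes "finite A" "finite B" "a \<in> A"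
  shows "poly (Syl p q A B) a = (-1) ^ p * Rprod {a} B * syl_lc p q (A - {a}) B"
proof -
  have "poly (Syl p q A B) a = (\<Sum>A'\<in>ksubsets p (A - {a}). \<Sum>B'\<in>ksubsets q B.
          syl_weight A B A' B' * (Rprod {a} A' * Rprod {a} B'))"
    unfolding poly_Syl using assms
    by (intro sum.mono_neutral_right)
       (auto simp: Rprod_singleton_mem rev_finite_subset[OF assms(1)] rev_finite_subset[OF assms(2)])
  also have "\<dots> = (\<Sum>A'\<in>ksubsets p (A - {a}). \<Sum>B'\<in>ksubsets q B.
          (-1) ^ p * Rprod {a} B * syl_weight (A - {a}) B A' B')"
    using assms by (intro sum.cong refl) (auto simp: syl_weight_remove_from_A)
  finally show ?thesis
    by (simp add: syl_lc_def sum_distrib_left)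
qed

lemma poly_Syl_at_B:
  assumes "finite A" "finite B" "b \<in> B"
  shows "poly (Syl p q A B) b = (-1) ^ (p + q) * Rprod A {b} * syl_lc p q A (B - {b})"
proof -
  have "poly (Syl p q A B) b = (\<Sum>A'\<in>ksubsets p A. \<Sum>B'\<in>ksubsets q (B - {b}).
          syl_weight A B A' B' * (Rprod {b} A' * Rprod {b} B'))"
    unfolding poly_Syl using assms
    by (intro sum.cong refl sum.mono_neutral_right)
       (auto simp: Rprod_singleton_mem rev_finite_subset[OF assms(1)] rev_finite_subset[OF assms(2)])
  also have "\<dots> = (\<Sum>A'\<in>ksubsets p A. \<Sum>B'\<in>ksubsets q (B - {b}).
          (-1) ^ (p + q) * Rprod A {b} * syl_weight A (B - {b}) A' B')"
    using assms by (intro sum.cong refl) (auto simp: syl_weight_remove_from_B)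
  finally show ?thesis
    by (simp add: syl_lc_def sum_distrib_left)
qed

lemma bij_betw_ksubsets_complement:
  assumes "finite X" "k \<le> card X"
  shows "bij_betw (\<lambda>Y. X - Y) (ksubsets k X) (ksubsets (card X - k) X)"
proof (rule bij_betw_byWitness[where f' = "\<lambda>Y. X - Y"])
  show "(\<lambda>Y. X - Y) ` ksubsets k X \<subseteq> ksubsets (card X - k) X"
    using assms by (auto simp: card_Diff_subset rev_finite_subset[OF assms(1)])
  show "(\<lambda>Y. X - Y) ` ksubsets (card X - k) X \<subseteq> ksubsets k X"
    using assms by (auto simp: card_Diff_subset rev_finite_subset[OF assms(1)])
qed auto

lemma syl_lc_complement:
  assumes "finite A" "finite B" "p \<le> card A" "q \<le> card B"
  shows "syl_lc (card A - p) (card B - q) A B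
       = (-1) ^ (p * (card A - p) + q * (card B - q)) * syl_lc p q A B"
proof -
  have "syl_weight A B (A - A') (B - B')
        = (-1) ^ (p * (card A - p) + q * (card B - q)) * syl_weight A B A' B'"
    if A': "A' \<in> ksubsets p A" and B': "B' \<in> ksubsets q B" for A' B'
  proof -
    have fin: "finite A'" "finite B'"
      using A' B' assms by (auto intro: finite_subset)
    have "Rprod (A - A') A' = (-1) ^ (p * (card A - p)) * Rprod A' (A - A')"
      using Rprod_commute[of A' "A - A'"] fin A' assms by (simp add: card_Diff_subset)
    moreover have "Rprod (B - B') B' = (-1) ^ (q * (card B - q)) * Rprod B' (B - B')"
      using Rprod_commute[of B' "B - B'"] fin B' assms by (simp add: card_Diff_subset)
    moreover have "Rprod A' (A - A') \<noteq> 0" "Rprod B' (B - B') \<noteq> 0"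
      by (auto intro!: Rprod_nonzero)
    moreover have "A - (A - A') = A'" "B - (B - B') = B'"
      using A' B' by auto
    moreover have "((-1::'a) ^ n)\<^sup>2 = 1" for n
      by (simp flip: power_mult_distrib power_mult)
    ultimately show ?thesis
      unfolding syl_weight_def by (simp add: field_simps power_add power2_eq_square)
  qed
  then show ?thesis
    unfolding syl_lc_def
    by (simp add: sum.reindex_bij_betw[OF bij_betw_ksubsets_complement, symmetric]
        assms sum_distrib_left)
qed

lemma syl_lc_eq_0: "finite A \<Longrightarrow> finite B \<Longrightarrow> card A < p \<or> card B < q \<Longrightarrow> syl_lc p q A B = 0"
  by (auto simp: syl_lc_def ksubsets_empty)

section \<open>The identity for disjoint sets\<close>

definition Syl_comb :: "nat \<Rightarrow> nat \<Rightarrow> 'a::field set \<Rightarrow> 'a set \<Rightarrow> 'a poly" where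
  "Syl_comb p q A B =
     smult ((-1) ^ ((p + q - card A) * (card B - q) + (p + q - card B))
            * of_nat ((card A + card B - (p + q) - 1) choose (card B - q)))
           (Syl 0 (card A + card B - (p + q) - 1) A B)
   + smult ((-1) ^ ((p + q - card A) * (q + 1))
            * of_nat ((card A + card B - (p + q)) choose (card A - p)))
           (Syl (card A) (p + q - card A) A B)"

lemma binomial_add_complement:
  assumes "i + j = Suc k"
  shows "(k choose i) + (k choose j) = Suc k choose i"
proof (cases i)
  case 0
  with assms show ?thesis by simp
next
  case (Suc i')
  with assms have "j = k - i'" "i' \<le> k" by auto
  then show ?thesis
    using Suc binomial_symmetric[of i' k] by simp
qed

lemma neg_one_power_eq_if_even:
  "even (a + b) \<Longrightarrow> (-1::'a::ring_1) ^ a = (-1) ^ b"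
  by (auto simp: minus_one_power_iff)

lemma neg_one_power_eq_minus_if_odd:
  "odd (a + b) \<Longrightarrow> (-1::'a::ring_1) ^ a = - ((-1) ^ b)"
  by (auto simp: minus_one_power_iff)

lemma sign_at_A:
  fixes m n p q :: nat
  assumes "p < m" "q \<le> n" "m \<le> p + q" "n \<le> p + q"
  shows "(-1::'a::ring_1) ^ (p + (p + q - m + 1) * (q + 1) + (m + n - (p + q) - 1) * (p + q - m + 1))
       = (-1) ^ ((p + q - m) * (n - q) + (p + q - n))"
proof (rule neg_one_power_eq_if_even)
  obtain i j where mn: "m = p + Suc i" "n = q + j"
    using less_imp_Suc_add[OF assms(1)] le_Suc_ex[OF assms(2)] by auto
  moreover obtain s t where "p = j + s" "q = Suc i + t"
    using assms(3,4) le_Suc_ex[of j p] le_Suc_ex[of "Suc i" q] unfolding mn by auto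
  ultimately have ij: "m = p + Suc i" "n = q + j" "p = j + s" "q = Suc i + t"
    by auto
  have eqs: "p + q - m = t" "m + n - (p + q) - 1 = i + j" "n - q = j" "p + q - n = s"
    using ij by auto
  have even: "p + (t + 1) * (q + 1) + (i + j) * (t + 1) + (t * j + s)
            = 2 * (s + (t + 1) * (i + 1) + j + t * j) + t * (t + 1)"
    unfolding ij(3,4) by (simp add: algebra_simps)
  show "even (p + (p + q - m + 1) * (q + 1) + (m + n - (p + q) - 1) * (p + q - m + 1)
          + ((p + q - m) * (n - q) + (p + q - n)))"
    unfolding eqs even by simp
qed

lemma sign_at_B:
  fixes m n p q :: nat
  assumes "p \<le> m" "q \<le> n" "m \<le> p + q" "n \<le> p + q" "p + q < m + n"
  shows "(-1::'a::ring_1) ^ ((p + q - m) * (n - q) + (p + q - n) + (m + n - (p + q) - 1)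
          + (p + q - m) * (m + n - (p + q) - 1))
       = - ((-1) ^ ((p + q - m) * (q + 1) + (p + q)))"
proof (rule neg_one_power_eq_minus_if_odd)
  obtain i j where mn: "m = p + i" "n = q + j"
    using le_Suc_ex[OF assms(1)] le_Suc_ex[OF assms(2)] by auto
  moreover obtain s t where "p = j + s" "q = i + t"
    using assms(3,4) le_Suc_ex[of j p] le_Suc_ex[of i q] unfolding mn by auto
  ultimately have ij: "m = p + i" "n = q + j" "p = j + s" "q = i + t"
    by auto
  obtain k where k: "i + j = Suc k"
    using assms(5) unfolding ij(1,2) by (cases "i + j") auto
  have eqs: "m + n - (p + q) - 1 = k" "p + q - m = t" "n - q = j" "p + q - n = s"
    using ij k by auto
  have "t * i + t * j = t * k + t"
    using arg_cong[OF k, of "(*) t"] by (simp add: algebra_simps)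
  then have odd: "t * j + s + k + t * k + (t * (q + 1) + (p + q))
           = 2 * (t * k + t + k + s) + t * (t + 1) + 1"
    using k unfolding ij(3,4) by (simp add: algebra_simps)
  show "odd ((p + q - m) * (n - q) + (p + q - n) + (m + n - (p + q) - 1)
          + (p + q - m) * (m + n - (p + q) - 1) + ((p + q - m) * (q + 1) + (p + q)))"
    unfolding eqs odd by simp
qed

lemma degree_Syl_comb_le:
  assumes "finite A" "finite B" "max (card A) (card B) \<le> p + q"
  shows "degree (Syl_comb p q A B) \<le> p + q"
proof -
  have "card A + card B - (p + q) - 1 \<le> p + q"
    using assms(3) by auto
  then have "degree (Syl 0 (card A + card B - (p + q) - 1) A B) \<le> p + q"
    using degree_Syl_le[OF assms(1,2)] by (metis add_0 order_trans)
  moreover have "degree (Syl (card A) (p + q - card A) A B) \<le> p + q"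
    using degree_Syl_le[OF assms(1,2), of "card A" "p + q - card A"] assms(3) by simp
  ultimately show ?thesis
    unfolding Syl_comb_def by (intro degree_add_le order_trans[OF degree_smult_le])
qed

lemma syl_lc_eq_of_Syl_comb:
  assumes "finite A" "finite B" "card A = m" "card B = n" "p \<le> m" "q \<le> n"
    and "max m n \<le> p + q" "p + q \<le> m + n"
    and Syl_comb: "p + q < m + n \<Longrightarrow> Syl p q A B = Syl_comb p q A B"
  shows "syl_lc p q A B = (-1) ^ ((p + q - m) * (q + 1))
           * of_nat ((m + n - (p + q)) choose (m - p)) * syl_lc m (p + q - m) A B"
proof (cases "p + q = m + n")
  case True
  then have "p = m" "q = n"
    using assms by auto
  then show ?thesis
    by (simp add: minus_one_power_iff)
next
  case False
  then have less: "p + q < m + n"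
    using assms by simp
  have "coeff (Syl 0 (m + n - (p + q) - 1) A B) (p + q) = 0"
    using degree_Syl_le[OF assms(1,2), of 0 "m + n - (p + q) - 1"] assms(7) less
    by (intro coeff_eq_0) auto
  moreover have "coeff (Syl m (p + q - m) A B) (p + q) = syl_lc m (p + q - m) A B"
    using coeff_Syl_top[OF assms(1,2), of m "p + q - m"] assms(7) by simp
  ultimately show ?thesis
    using arg_cong[OF Syl_comb[OF less], of "\<lambda>P. coeff P (p + q)"] assms(1-4)
    by (simp add: coeff_Syl_top Syl_comb_def)
qed

lemma syl_lc_eq_syl_lc_0:
  fixes m n p q :: nat
  defines "k \<equiv> m + n - (p + q)"
  assumes fin: "finite A" "finite B" and card: "card A = m" "card B = n"
    and "p \<le> m" "q \<le> n" "max m n \<le> p + q" "p + q \<le> m + n"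
    and Syl_comb: "p + q < m + n \<Longrightarrow> Syl p q A B = Syl_comb p q A B"
  shows "syl_lc p q A B = (-1) ^ ((p + q - m) * (q + 1) + k * (p + q - m))
           * of_nat (k choose (n - q)) * syl_lc 0 k A B"
proof -
  have "syl_lc p q A B = (-1) ^ ((p + q - m) * (q + 1))
      * of_nat (k choose (m - p)) * syl_lc m (p + q - m) A B"
    unfolding k_def by (rule syl_lc_eq_of_Syl_comb) (use assms in auto)
  also have "syl_lc m (p + q - m) A B = (-1) ^ (k * (p + q - m)) * syl_lc 0 k A B"
  proof -
    have "n - k = p + q - m" "k \<le> n"
      using assms unfolding k_def by auto
    then show ?thesis
      using syl_lc_complement[OF fin, of 0 k] card by simp
  qed
  also have "k choose (m - p) = k choose (n - q)"
    using binomial_symmetric[of "m - p" k] assms unfolding k_def by simp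
  finally show ?thesis
    by (simp add: power_add mult_ac)
qed

lemma syl_lc_delete_A:
  fixes m n p q :: nat
  defines "k \<equiv> m + n - (p + q) - 1" and "r \<equiv> p + q - m"
  assumes fin: "finite A" "finite B" and a: "a \<in> A" and card: "card A = m" "card B = n"
    and "p \<le> m" "q \<le> n" "max m n \<le> p + q" "p + q < m + n"
    and IH: "p < m \<Longrightarrow> p + q < m - 1 + n \<Longrightarrow> Syl p q (A - {a}) B = Syl_comb p q (A - {a}) B"
  shows "(-1) ^ p * syl_lc p q (A - {a}) B
      = (-1) ^ (r * (n - q) + (p + q - n)) * of_nat (k choose (n - q)) * syl_lc 0 k (A - {a}) B"
proof (cases "p = m")
  case True
  then have "k choose (n - q) = 0"
    using assms unfolding k_def by simp
  moreover have "syl_lc p q (A - {a}) B = 0"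
    using True card_Diff1_less[OF fin(1) a] fin card by (simp add: syl_lc_eq_0)
  ultimately show ?thesis
    by (simp add: binomial_eq_0)
next
  case False
  then have "p < m"
    using assms by simp
  have le: "m \<le> p + q" "n \<le> p + q"
    using assms by auto
  have "p + q - (m - 1) = r + 1" "m - 1 + n - (p + q) = k"
    using \<open>p < m\<close> assms unfolding k_def r_def by auto
  moreover have "syl_lc p q (A - {a}) B = (-1) ^ ((p + q - (m - 1)) * (q + 1)
      + (m - 1 + n - (p + q)) * (p + q - (m - 1)))
      * of_nat ((m - 1 + n - (p + q)) choose (n - q)) * syl_lc 0 (m - 1 + n - (p + q)) (A - {a}) B"
    by (rule syl_lc_eq_syl_lc_0) (use fin a card IH \<open>p < m\<close> assms in auto)
  ultimately have "(-1) ^ p * syl_lc p q (A - {a}) B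
      = (-1) ^ (p + (r + 1) * (q + 1) + k * (r + 1)) * of_nat (k choose (n - q)) * syl_lc 0 k (A - {a}) B"
    by (simp add: power_add)
  also have "(-1) ^ (p + (r + 1) * (q + 1) + k * (r + 1)) = (-1::'a) ^ (r * (n - q) + (p + q - n))"
    using sign_at_A[OF \<open>p < m\<close> \<open>q \<le> n\<close> le] unfolding k_def r_def .
  finally show ?thesis .
qed

lemma poly_Syl_comb_at_A:
  assumes fin: "finite A" "finite B" and a: "a \<in> A" and card: "card A = m" "card B = n"
    and "p \<le> m" "q \<le> n" "max m n \<le> p + q" "p + q < m + n"
    and IH: "p < m \<Longrightarrow> p + q < m - 1 + n \<Longrightarrow> Syl p q (A - {a}) B = Syl_comb p q (A - {a}) B"
  shows "poly (Syl p q A B) a = poly (Syl_comb p q A B) a"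
proof -
  have "syl_lc m (p + q - m) (A - {a}) B = 0"
    using card_Diff1_less[OF fin(1) a] fin card by (simp add: syl_lc_eq_0)
  then show ?thesis
    using syl_lc_delete_A[OF assms] poly_Syl_at_A[OF fin a] card
    unfolding Syl_comb_def by (simp add: algebra_simps)
qed

lemma syl_lc_delete_B:
  fixes m n p q :: nat
  defines "k \<equiv> m + n - (p + q) - 1" and "r \<equiv> p + q - m"
  assumes fin: "finite A" "finite B" and b: "b \<in> B" and card: "card A = m" "card B = n"
    and "p \<le> m" "q \<le> n" "max m n \<le> p + q" "p + q < m + n"
    and IH: "q < n \<Longrightarrow> p + q < m + (n - 1) \<Longrightarrow> Syl p q A (B - {b}) = Syl_comb p q A (B - {b})"
  shows "syl_lc p q A (B - {b}) = (-1) ^ (r * (q + 1)) * of_nat (k choose (m - p)) * syl_lc m r A (B - {b})"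
proof -
  define B0 where "B0 = B - {b}"
  have B0: "finite B0" "card B0 = n - 1" "0 < n"
    using fin b card unfolding B0_def by (auto simp: card_gt_0_iff)
  have "syl_lc p q A B0 = (-1) ^ (r * (q + 1)) * of_nat (k choose (m - p)) * syl_lc m r A B0"
  proof (cases "q = n")
    case True
    then have "k choose (m - p) = 0"
      using assms unfolding k_def by simp
    moreover have "syl_lc p q A B0 = 0"
      using True B0 fin by (simp add: syl_lc_eq_0)
    ultimately show ?thesis
      by (simp add: binomial_eq_0)
  next
    case False
    have "m + (n - 1) - (p + q) = k"
      using assms unfolding k_def by auto
    moreover have "syl_lc p q A B0 = (-1) ^ ((p + q - m) * (q + 1))
        * of_nat ((m + (n - 1) - (p + q)) choose (m - p)) * syl_lc m (p + q - m) A B0"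
      by (rule syl_lc_eq_of_Syl_comb[OF fin(1) B0(1) card(1) B0(2)])
         (use IH False assms in \<open>auto simp: B0_def\<close>)
    ultimately show ?thesis
      unfolding r_def by (simp only:)
  qed
  then show ?thesis
    unfolding B0_def .
qed

lemma poly_Syl_comb_at_B:
  assumes fin: "finite A" "finite B" and b: "b \<in> B" and card: "card A = m" "card B = n"
    and "p \<le> m" "q \<le> n" "max m n \<le> p + q" "p + q < m + n"
    and IH: "q < n \<Longrightarrow> p + q < m + (n - 1) \<Longrightarrow> Syl p q A (B - {b}) = Syl_comb p q A (B - {b})"
  shows "poly (Syl p q A B) b = poly (Syl_comb p q A B) b"
proof -
  define B0 k r where "B0 = B - {b}" and "k = m + n - (p + q) - 1" and "r = p + q - m"
  define S where "S = syl_lc m r A B0"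
  have B0: "finite B0" "card B0 = n - 1"
    using fin b card unfolding B0_def by auto
  have le: "m \<le> p + q" "n \<le> p + q"
    using assms by auto
  have lc: "syl_lc p q A B0 = (-1) ^ (r * (q + 1)) * of_nat (k choose (m - p)) * S"
    using syl_lc_delete_B[OF assms] unfolding B0_def S_def k_def r_def .
  have compl: "syl_lc 0 k A B0 = (-1) ^ (r * k) * S"
  proof -
    have "n - 1 - r = k" "r \<le> n - 1"
      using assms le unfolding k_def r_def by auto
    then show ?thesis
      using syl_lc_complement[OF fin(1) B0(1), of m r] card B0 unfolding S_def by simp
  qed
  have ij: "m - p + (n - q) = Suc k"
    using assms unfolding k_def by auto
  have pascal: "of_nat ((k + 1) choose (m - p)) = of_nat (k choose (n - q)) + (of_nat (k choose (m - p)) :: 'a)"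
    by (simp flip: binomial_add_complement[OF ij])
  have sign: "(-1) ^ (r * (n - q)) * (-1) ^ (p + q - n) * (-1) ^ k * (-1) ^ (r * k)
      = - ((-1) ^ (r * (q + 1)) * (-1::'a) ^ (p + q))"
    using sign_at_B[OF assms(6,7) le assms(9)] unfolding k_def r_def power_add .
  have "poly (Syl_comb p q A B) b
      = ((-1) ^ (r * (n - q)) * (-1) ^ (p + q - n) * (-1) ^ k * (-1) ^ (r * k))
          * of_nat (k choose (n - q)) * Rprod A {b} * S
        + (-1) ^ (r * (q + 1)) * (-1) ^ (p + q) * of_nat ((k + 1) choose (m - p)) * Rprod A {b} * S"
  proof -
    have e: "m + n - (p + q) = k + 1" "m + r = p + q"
      using assms le unfolding k_def r_def by auto
    show ?thesis
      unfolding Syl_comb_def card k_def[symmetric] r_def[symmetric] e(1) poly_add poly_smult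
        poly_Syl_at_B[OF fin b] B0_def[symmetric] S_def[symmetric] e(2)
      by (simp add: compl power_add mult_ac)
  qed
  also have "\<dots> = (-1) ^ (p + q) * Rprod A {b} * syl_lc p q A B0"
    unfolding sign pascal lc by (simp add: algebra_simps)
  finally show ?thesis
    unfolding poly_Syl_at_B[OF fin b] B0_def ..
qed

lemma Syl_eq_Syl_comb_disjoint:
  assumes "finite A" "finite B" "A \<inter> B = {}" "p \<le> card A" "q \<le> card B"
    and "max (card A) (card B) \<le> p + q" "p + q < card A + card B"
  shows "Syl p q A B = Syl_comb p q A B"
  using assms
proof (induction "card A + card B" arbitrary: A B rule: less_induct)
  case less
  have card: "card (A \<union> B) = card A + card B"
    using less.prems by (simp add: card_Un_disjoint)
  show ?case
  proof (rule poly_eqI_degree)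
    fix x assume "x \<in> A \<union> B"
    then show "poly (Syl p q A B) x = poly (Syl_comb p q A B) x"
    proof
      assume x: "x \<in> A"
      show ?thesis
      proof (rule poly_Syl_comb_at_A[OF less.prems(1,2) x refl refl less.prems(4-7)])
        assume "p < card A" "p + q < card A - 1 + card B"
        with less.prems x show "Syl p q (A - {x}) B = Syl_comb p q (A - {x}) B"
          by (intro less.hyps) (auto simp: card_Diff_singleton card_gt_0_iff)
      qed
    next
      assume x: "x \<in> B"
      show ?thesis
      proof (rule poly_Syl_comb_at_B[OF less.prems(1,2) x refl refl less.prems(4-7)])
        assume "q < card B" "p + q < card A + (card B - 1)"
        with less.prems x show "Syl p q A (B - {x}) = Syl_comb p q A (B - {x})"
          by (intro less.hyps) (auto simp: card_Diff_singleton card_gt_0_iff)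
      qed
    qed
  next
    show "degree (Syl p q A B) < card (A \<union> B)" "degree (Syl_comb p q A B) < card (A \<union> B)"
      using degree_Syl_le[of A B p q] degree_Syl_comb_le[of A B p q] less.prems card by auto
  qed
qed


section \<open>Moving \<open>B\<close> away from \<open>A\<close>\<close>

locale comm_ring_hom =
  fixes hom :: "'a::comm_ring_1 \<Rightarrow> 'b::comm_ring_1"
  assumes hom_add: "hom (x + y) = hom x + hom y"
    and hom_mult: "hom (x * y) = hom x * hom y"
    and hom_one: "hom 1 = 1"
begin

lemma hom_zero: "hom 0 = 0"
  using hom_add[of 0 0] by simp

lemma hom_uminus: "hom (- x) = - hom x"
  using hom_add[of x "- x"] by (simp add: hom_zero eq_neg_iff_add_eq_0 add.commute)

lemma hom_diff: "hom (x - y) = hom x - hom y"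
  using hom_add[of x "- y"] by (simp add: hom_uminus)

lemma hom_power: "hom (x ^ n) = hom x ^ n"
  by (induction n) (simp_all add: hom_one hom_mult)

lemma hom_of_nat: "hom (of_nat n) = of_nat n"
  by (induction n) (simp_all add: hom_zero hom_one hom_add)

lemma hom_prod: "hom (prod f S) = (\<Prod>x\<in>S. hom (f x))"
  by (induction S rule: infinite_finite_induct) (simp_all add: hom_one hom_mult)

lemma map_poly_hom_add: "map_poly hom (P + Q) = map_poly hom P + map_poly hom Q"
  by (rule poly_eqI) (simp add: coeff_map_poly hom_zero hom_add)

lemma map_poly_hom_smult: "map_poly hom (smult c P) = smult (hom c) (map_poly hom P)"
  by (rule map_poly_smult) (simp_all add: hom_zero hom_mult)

lemma map_poly_hom_mult: "map_poly hom (P * Q) = map_poly hom P * map_poly hom Q"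
  by (induction P rule: pCons_induct)
     (simp_all add: map_poly_pCons map_poly_hom_add map_poly_hom_smult hom_zero del: pCons_0_0)

lemma map_poly_hom_sum: "map_poly hom (sum f S) = (\<Sum>x\<in>S. map_poly hom (f x))"
  by (induction S rule: infinite_finite_induct) (simp_all add: map_poly_hom_add)

lemma map_poly_hom_prod: "map_poly hom (prod f S) = (\<Prod>x\<in>S. map_poly hom (f x))"
  by (induction S rule: infinite_finite_induct) (simp_all add: map_poly_hom_mult hom_one)

lemma map_poly_hom_pCons: "map_poly hom (pCons c P) = pCons (hom c) (map_poly hom P)"
  by (simp add: map_poly_pCons hom_zero)

end

locale field_hom = comm_ring_hom hom for hom :: "'a::field \<Rightarrow> 'b::field"
begin

lemma hom_inverse: "hom (inverse x) = inverse (hom x)"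
proof (cases "x = 0")
  case False
  then have "hom x * hom (inverse x) = 1"
    by (simp flip: hom_mult add: hom_one)
  then show ?thesis
    by (simp add: inverse_unique)
qed (simp add: hom_zero)

lemma hom_divide: "hom (x / y) = hom x / hom y"
  by (simp add: divide_inverse hom_mult hom_inverse)

lemma inj_hom: "inj hom"
proof (rule injI)
  fix x y assume "hom x = hom y"
  then have "hom ((x - y) * inverse (x - y)) = 0"
    by (simp add: hom_mult hom_diff)
  then show "x = y"
    by (cases "x = y") (simp_all add: hom_one)
qed

end

text \<open>
  \<open>Syl_{p,q}(\<phi> A, \<phi> B + t)\<close> over an arbitrary commutative ring: the denominators do not
  depend on \<open>t\<close>, so they are inverted in the field before \<open>\<phi>\<close> is applied.
\<close>
definition Syl_shifted ::
    "('a::field \<Rightarrow> 'b::comm_ring_1) \<Rightarrow> 'b \<Rightarrow> nat \<Rightarrow> nat \<Rightarrow> 'a set \<Rightarrow> 'a set \<Rightarrow> 'b poly" where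
  "Syl_shifted \<phi> t p q A B =
     (\<Sum>A'\<in>ksubsets p A. \<Sum>B'\<in>ksubsets q B.
        smult ((\<Prod>a\<in>A'. \<Prod>b\<in>B'. \<phi> a - (\<phi> b + t)) * (\<Prod>a\<in>A - A'. \<Prod>b\<in>B - B'. \<phi> a - (\<phi> b + t))
               * \<phi> (1 / (Rprod A' (A - A') * Rprod B' (B - B'))))
              ((\<Prod>a\<in>A'. [:- \<phi> a, 1:]) * (\<Prod>b\<in>B'. [:- (\<phi> b + t), 1:])))"

lemma Syl_shifted_id: "Syl_shifted id 0 p q A B = Syl p q A B"
  unfolding Syl_shifted_def Syl_def Rprod_def Rpoly_def by simp

lemma (in comm_ring_hom) map_poly_Syl_shifted:
  "map_poly hom (Syl_shifted \<phi> t p q A B) = Syl_shifted (hom \<circ> \<phi>) (hom t) p q A B"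
  unfolding Syl_shifted_def
  by (simp add: map_poly_hom_sum map_poly_hom_smult map_poly_hom_mult map_poly_hom_prod
      map_poly_hom_pCons hom_zero hom_one hom_mult hom_prod hom_diff hom_add hom_uminus)

lemma sum_ksubsets_image:
  assumes "inj_on f X"
  shows "(\<Sum>Y\<in>ksubsets k (f ` X). g Y) = (\<Sum>Y\<in>ksubsets k X. g (f ` Y))"
proof -
  have "ksubsets k (f ` X) = (`) f ` ksubsets k X"
  proof
    show "ksubsets k (f ` X) \<subseteq> (`) f ` ksubsets k X"
    proof
      fix Z assume Z: "Z \<in> ksubsets k (f ` X)"
      then obtain Y where "Y \<subseteq> X" "Z = f ` Y"
        by (auto simp: subset_image_iff)
      with Z assms show "Z \<in> (`) f ` ksubsets k X"
        by (auto simp: card_image inj_on_subset)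
    qed
  qed (use assms in \<open>auto simp: card_image inj_on_subset\<close>)
  moreover have "inj_on ((`) f) (ksubsets k X)"
    by (rule inj_on_subset[OF inj_on_image_Pow[OF assms]]) auto
  ultimately show ?thesis
    by (simp add: sum.reindex)
qed

lemma Rprod_image:
  "inj_on f X \<Longrightarrow> inj_on g Y \<Longrightarrow> Rprod (f ` X) (g ` Y) = (\<Prod>a\<in>X. \<Prod>b\<in>Y. f a - g b)"
  unfolding Rprod_def by (simp add: prod.reindex)

lemma Rpoly_image: "inj_on f X \<Longrightarrow> Rpoly (f ` X) = (\<Prod>a\<in>X. [:- f a, 1:])"
  unfolding Rpoly_def by (simp add: prod.reindex)

lemma (in field_hom) Syl_shifted_eq_Syl_image:
  "Syl_shifted hom t p q A B = Syl p q (hom ` A) ((\<lambda>b. hom b + t) ` B)"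
proof -
  define u where "u = (\<lambda>b. hom b + t)"
  have inj: "inj_on hom X" "inj_on u X" for X
    using inj_hom by (auto simp: u_def inj_on_def dest: injD)
  have diff: "hom ` A - hom ` X = hom ` (A - X)" "u ` B - u ` X = u ` (B - X)" for X
    using inj(1,2)[of UNIV] by (simp_all add: image_set_diff)
  have "Rprod (hom ` X) (u ` Y) = (\<Prod>a\<in>X. \<Prod>b\<in>Y. hom a - (hom b + t))" for X Y
    by (simp only: Rprod_image[OF inj(1) inj(2)]) (simp add: u_def)
  moreover have "Rprod (hom ` X) (hom ` Y) = hom (Rprod X Y)" for X Y
    by (simp only: Rprod_image[OF inj(1) inj(1)]) (simp add: Rprod_def hom_prod hom_diff)
  moreover have "Rprod (u ` X) (u ` Y) = hom (Rprod X Y)" for X Y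
    by (simp only: Rprod_image[OF inj(2) inj(2)]) (simp add: Rprod_def hom_prod hom_diff u_def)
  moreover have "Rpoly (u ` X) = (\<Prod>b\<in>X. [:- (hom b + t), 1:])" for X
    by (simp only: Rpoly_image[OF inj(2)]) (simp add: u_def)
  ultimately have "Syl_shifted hom t p q A B = Syl p q (hom ` A) (u ` B)"
    unfolding Syl_shifted_def Syl_def sum_ksubsets_image[OF inj(1)] sum_ksubsets_image[OF inj(2)]
    by (intro sum.cong refl) (simp add: diff Rpoly_image[OF inj(1)] hom_divide hom_mult hom_one)
  then show ?thesis
    unfolding u_def .
qed

interpretation to_fract_hom: comm_ring_hom "to_fract :: 'a::idom \<Rightarrow> 'a fract"
  by unfold_locales simp_all

interpretation poly_0_hom: comm_ring_hom "\<lambda>P::'a::comm_ring_1 poly. poly P 0"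
  by unfold_locales simp_all

interpretation const_fract_hom: field_hom "\<lambda>a::'a::field. to_fract [:a:]"
  by unfold_locales (simp_all flip: to_fract_add to_fract_mult one_pCons)

lemma const_fract_ne_shift: "to_fract [:a:] \<noteq> to_fract [:b:] + to_fract [:0, 1 :: 'a::field:]"
proof
  assume "to_fract [:a:] = to_fract [:b:] + to_fract [:0, 1:]"
  then have "[:a:] = [:b, 1:]"
    by (simp flip: to_fract_add)
  then show False
    using arg_cong[of _ _ "\<lambda>P. coeff P 1"] by fastforce
qed

lemma Syl_eq_Syl_comb:
  fixes A B :: "'a::field set"
  assumes "finite A" "finite B" "p \<le> card A" "q \<le> card B"
    and "max (card A) (card B) \<le> p + q" "p + q < card A + card B"
  shows "Syl p q A B = Syl_comb p q A B"
proof -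
  define \<phi> :: "'a \<Rightarrow> 'a poly fract" where "\<phi> = (\<lambda>a. to_fract [:a:])"
  define \<tau> :: "'a poly fract" where "\<tau> = to_fract [:0, 1:]"
  define S where "S x y = Syl_shifted (\<lambda>a. [:a:]) [:0, 1:] x y A B" for x y
  define k r where "k = card A + card B - (p + q) - 1" and "r = p + q - card A"
  define c\<^sub>1 c\<^sub>2 :: "'a poly" where
    "c\<^sub>1 = (-1) ^ (r * (card B - q) + (p + q - card B)) * of_nat (k choose (card B - q))"
    and "c\<^sub>2 = (-1) ^ (r * (q + 1)) * of_nat ((card A + card B - (p + q)) choose (card A - p))"
  have Syl_image: "Syl x y (\<phi> ` A) ((\<lambda>b. \<phi> b + \<tau>) ` B) = map_poly to_fract (S x y)" for x y
    unfolding S_def to_fract_hom.map_poly_Syl_shifted \<phi>_def \<tau>_def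
    by (simp add: comp_def flip: const_fract_hom.Syl_shifted_eq_Syl_image)
  have Syl_eval: "map_poly (\<lambda>P. poly P 0) (S x y) = Syl x y A B" for x y
    unfolding S_def poly_0_hom.map_poly_Syl_shifted by (simp add: comp_def id_def flip: Syl_shifted_id)
  have card: "card (\<phi> ` A) = card A" "card ((\<lambda>b. \<phi> b + \<tau>) ` B) = card B"
    using const_fract_hom.inj_hom by (auto simp: \<phi>_def card_image inj_on_def dest: injD)
  have "\<phi> ` A \<inter> (\<lambda>b. \<phi> b + \<tau>) ` B = {}"
    using const_fract_ne_shift by (auto simp: \<phi>_def \<tau>_def)
  then have "Syl p q (\<phi> ` A) ((\<lambda>b. \<phi> b + \<tau>) ` B) = Syl_comb p q (\<phi> ` A) ((\<lambda>b. \<phi> b + \<tau>) ` B)"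
    by (intro Syl_eq_Syl_comb_disjoint) (use assms card in auto)
  then have "map_poly to_fract (S p q) = map_poly to_fract (smult c\<^sub>1 (S 0 k) + smult c\<^sub>2 (S (card A) r))"
    unfolding Syl_comb_def card Syl_image c\<^sub>1_def c\<^sub>2_def k_def r_def
    by (simp add: to_fract_hom.map_poly_hom_add to_fract_hom.map_poly_hom_smult
        to_fract_hom.hom_power to_fract_hom.hom_of_nat)
  then have "S p q = smult c\<^sub>1 (S 0 k) + smult c\<^sub>2 (S (card A) r)"
    by (simp only: fract_poly_eq_iff)
  from arg_cong[OF this, of "map_poly (\<lambda>P. poly P 0)"] show ?thesis
    unfolding Syl_comb_def c\<^sub>1_def c\<^sub>2_def k_def r_def
    by (simp add: Syl_eval poly_0_hom.map_poly_hom_add poly_0_hom.map_poly_hom_smult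
        poly_0_hom.hom_power poly_0_hom.hom_of_nat)
qed

theorem proposition3p8:
  fixes A B :: "'a::field set" and m n p q :: nat
  assumes "finite A" "finite B" "card A = m" "card B = n"
    and "p \<le> m" "q \<le> n"
    and "max m n \<le> p + q" "p + q + 1 \<le> m + n"
  shows "Syl p q A B =
     smult ((-1) ^ ((p + q - m) * (n - q) + (p + q - n))
            * of_nat ((m + n - (p + q) - 1) choose (n - q)))
           (Syl 0 (m + n - (p + q) - 1) A B)
   + smult ((-1) ^ ((p + q - m) * (q + 1))
            * of_nat ((m + n - (p + q) - 1 + 1) choose (m - p)))
           (Syl m (p + q - m) A B)"
proof -
  have "m + n - (p + q) - 1 + 1 = m + n - (p + q)"
    using assms(8) by simp
  moreover have "Syl p q A B = Syl_comb p q A B"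
    using Syl_eq_Syl_comb[of A B p q] assms by simp
  ultimately show ?thesis
    unfolding Syl_comb_def assms(3,4) by simp
qed

end
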